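(* Let $A\subseteq X$ be a clopen set with $A\neq\emptyset$, $A\neq X$. Then in $G=S(2^\infty)\ltimes \widetilde C(X;\mathbb{Z}_2)$ one has $\mathrm{fpc}(\widetilde f_A)=\{e,\widetilde f_A\}$.
   Context: For a group $G$ and $g\in G$, $C_G(g)$ is the centralizer of $g$ and $\mathrm{fpc}(g)=\{h\in G:\ \{t^{-1}ht: t\in C_G(g)\}\text{ is finite}\}$. For $n\ge1$ let $S(2^n)$ be the symmetric group of the finite set $\{0,1\}^n$, embedded in $S(2^{n+1})$ via $s\mapsto\tilde s$, $\tilde s(x,y)=(s(x),y)$ ($x\in\{0,1\}^n$, $y\in\{0,1\}$); $S(2^\infty)=\bigcup_n S(2^n)$. Let $X=\{0,1\}^{\mathbb N}$; $S(2^\infty)$ acts on $X$ by homeomorphisms via $s(x,y)=(s(x),y)$ for $s\in S(2^n)$, $x\in\{0,1\}^n$, $y\in\{0,1\}^{\mathbb N}$. $C(X;\mathbb Z_2)$ is the abelian group of continuous maps $X\to\mathbb Z_2$ under pointwise addition; its elements are $f_A=\mathbf 1_A$ for clopen $A\subseteq X$, with $f_Af_B=f_{A\triangle B}$. $S(2^\infty)$ acts by $g\cdot f_A=f_{g(A)}$. The constant functions $\{f_\emptyset,f_X\}$ form an invariant subgroup and $\widetilde C(X;\mathbb Z_2)$ is the quotient group; $\widetilde f_A$ denotes the class of $f_A$ (so $\widetilde f_A=\widetilde f_{X\setminus A}$). $G=S(2^\infty)\ltimes\widetilde C(X;\mathbb Z_2)$, with $g\widetilde f_Ag^{-1}=\widetilde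 f_{g(A)}$. *)

theory Defs
  imports "HOL-Analysis.Analysis" "HOL-Algebra.Group"
begin

text \<open>The Cantor space X = {0,1}^N is the type nat \<Rightarrow> bool with the product topology
  (bool carries the discrete = order topology).\<close>

type_synonym cantor = "nat \<Rightarrow> bool"

definition clopen_set :: "cantor set \<Rightarrow> bool" where
  "clopen_set A \<longleftrightarrow> open A \<and> closed A"

text \<open>S(2^\<infinity>): homeomorphisms of X of the form (x,y) \<mapsto> (s(x),y) with s a permutation
  of {0,1}^n for some n: bijections that leave every coordinate i \<ge> n unchanged and whose
  first n output coordinates depend only on the first n input coordinates.\<close>

definition S2inf :: "(cantor \<Rightarrow> cantor) set" where
  "S2inf = {g. bij g \<and> (\<exists>n. \<forall>x y. (\<forall>i\<ge>n. g x i = x i) \<and>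
                 ((\<forall>i<n. x i = y i) \<longrightarrow> (\<forall>i<n. g x i = g y i)))}"

text \<open>Elements of the quotient C~(X;Z_2) are represented by the class {A, X - A} of a
  clopen set A (this is exactly the coset f_A + {f_0, f_X}).\<close>

definition cls :: "cantor set \<Rightarrow> cantor set set" where
  "cls A = {A, - A}"

definition Ctilde :: "cantor set set set" where
  "Ctilde = {cls A | A. clopen_set A}"

text \<open>Sum of classes (f_A f_B = f_{A \<triangle> B}) and action g . f_A = f_{g(A)}.\<close>

definition cls_add :: "cantor set set \<Rightarrow> cantor set set \<Rightarrow> cantor set set" where
  "cls_add F K = {(B - C) \<union> (C - B) | B C. B \<in> F \<and> C \<in> K}"

definition cls_act :: "(cantor \<Rightarrow> cantor) \<Rightarrow> cantor set set \<Rightarrow> cantor set set" where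
  "cls_act g F = (\<lambda>B. g ` B) ` F"

text \<open>G = S(2^\<infinity>) \<ltimes> C~(X;Z_2): the pair (g, F) stands for the product g \<cdot> F, so that
  (g F)(h K) = (g h)(h^{-1}(F) K); equivalently g F g^{-1} = g(F).\<close>

definition Gsd :: "((cantor \<Rightarrow> cantor) \<times> cantor set set) monoid" where
  "Gsd = \<lparr> carrier = S2inf \<times> Ctilde,
          mult = (\<lambda>(g, F) (h, K). (g \<circ> h, cls_add (cls_act (inv_into UNIV h) F) K)),
          one = (id, cls {}) \<rparr>"

definition ftilde :: "cantor set \<Rightarrow> (cantor \<Rightarrow> cantor) \<times> cantor set set" where
  "ftilde A = (id, cls A)"

definition centralizer_of :: "('a, 'b) monoid_scheme \<Rightarrow> 'a \<Rightarrow> 'a set" where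
  "centralizer_of G g = {t \<in> carrier G. t \<otimes>\<^bsub>G\<^esub> g = g \<otimes>\<^bsub>G\<^esub> t}"

definition fpc :: "('a, 'b) monoid_scheme \<Rightarrow> 'a \<Rightarrow> 'a set" where
  "fpc G g = {h \<in> carrier G.
     finite {inv\<^bsub>G\<^esub> t \<otimes>\<^bsub>G\<^esub> h \<otimes>\<^bsub>G\<^esub> t | t. t \<in> centralizer_of G g}}"

end

theory Submission
  imports Defs
begin

text \<open>
  An element h of G is a pair (k, f~_B) with k in S(2^\<infinity>) and B clopen, and clopen
  sets are exactly the sets determined by a finite prefix of coordinates. The centralizer
  of f~_A contains all f~_F (the quotient C~(X; Z_2) is abelian) and all permutations
  in S(2^\<infinity>) that preserve A.
  If k \<noteq> id, choose x0 with k x0 \<noteq> x0 and n with k \<in> S(2^n); then k moves the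
  length-n cylinder C around k x0 off itself, and conjugating h by f~_{C_m}, where
  C_m = C \<inter> {x | x (n + m)}, replaces B by k^{-1}(C_m) \<triangle> B \<triangle> C_m. These sets are
  pairwise different even modulo complements, so h has infinitely many conjugates.
  If k = id but B is none of \<emptyset>, X, A, X - A, there are p \<in> B and q \<notin> B on the same
  side of A; the involution exchanging the cylinders around p and q inside the
  half-space {x | x (N + m)} preserves A and moves B to a set depending on m, again
  giving infinitely many conjugates.
\<close>

lemma (in group) commuting_in_fpc:
  assumes "h \<in> carrier G" and commutes: "\<And>t. t \<in> centralizer_of G g \<Longrightarrow> t \<otimes> h = h \<otimes> t"
  shows "h \<in> fpc G g"
proof -
  have "inv t \<otimes> h \<otimes> t = h" if "t \<in> centralizer_of G g" for t
  proof -
    have t: "t \<in> carrier G"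
      using that by (simp add: centralizer_of_def)
    have "inv t \<otimes> h \<otimes> t = inv t \<otimes> (t \<otimes> h)"
      using assms(1) t by (simp add: m_assoc commutes[OF that])
    also have "\<dots> = h"
      using assms(1) t by (simp flip: m_assoc)
    finally show ?thesis .
  qed
  then have "{inv t \<otimes> h \<otimes> t | t. t \<in> centralizer_of G g} \<subseteq> {h}"
    by blast
  then show ?thesis
    using assms(1) finite_subset unfolding fpc_def by blast
qed

lemma not_in_fpcI:
  fixes \<phi> :: "nat \<Rightarrow> 'a"
  assumes "inj \<phi>"
    and "\<And>m. \<exists>t \<in> centralizer_of G g. inv\<^bsub>G\<^esub> t \<otimes>\<^bsub>G\<^esub> h \<otimes>\<^bsub>G\<^esub> t = \<phi> m"
  shows "h \<notin> fpc G g"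
proof
  assume "h \<in> fpc G g"
  moreover have "\<phi> m \<in> {inv\<^bsub>G\<^esub> t \<otimes>\<^bsub>G\<^esub> h \<otimes>\<^bsub>G\<^esub> t | t. t \<in> centralizer_of G g}" for m
    using assms(2)[of m] by (metis (mono_tags, lifting) mem_Collect_eq)
  ultimately show False
    using range_inj_infinite[OF assms(1)] finite_subset[of "range \<phi>"] unfolding fpc_def by blast
qed

definition prefix_determined :: "nat \<Rightarrow> (nat \<Rightarrow> 'a) set \<Rightarrow> bool" where
  "prefix_determined n B \<longleftrightarrow> (\<forall>x y. (\<forall>i<n. x i = y i) \<longrightarrow> (x \<in> B \<longleftrightarrow> y \<in> B))"

lemma prefix_determinedD:
  "prefix_determined n B \<Longrightarrow> \<forall>i<n. x i = y i \<Longrightarrow> x \<in> B \<longleftrightarrow> y \<in> B"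
  unfolding prefix_determined_def by blast

lemma prefix_determined_mono: "prefix_determined n B \<Longrightarrow> n \<le> m \<Longrightarrow> prefix_determined m B"
  unfolding prefix_determined_def by auto

lemma prefix_determined_Compl: "prefix_determined n B \<Longrightarrow> prefix_determined n (- B)"
  unfolding prefix_determined_def by auto

lemma open_cylinder: "open {y :: nat \<Rightarrow> 'a::discrete_topology. \<forall>i<n. y i = x i}"
proof -
  have "{y :: nat \<Rightarrow> 'a. \<forall>i<n. y i = x i} = (\<Inter>i<n. (\<lambda>y. y i) -` {x i})"
    by auto
  then show ?thesis
    by (simp add: open_INT open_vimage open_discrete)
qed

lemma open_contains_cylinder:
  fixes U :: "(nat \<Rightarrow> 'a::topological_space) set"
  assumes "open U" "x \<in> U"
  obtains n where "{y. \<forall>i<n. y i = x i} \<subseteq> U"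
proof -
  have "openin (product_topology (\<lambda>_. euclidean) UNIV) U"
    using assms(1) by (simp add: open_fun_def)
  from product_topology_open_contains_basis[OF this assms(2)] obtain X
    where X: "x \<in> (\<Pi>\<^sub>E i\<in>UNIV. X i)" "finite {i. X i \<noteq> UNIV}" "(\<Pi>\<^sub>E i\<in>UNIV. X i) \<subseteq> U"
    by auto
  obtain n where n: "{i. X i \<noteq> UNIV} \<subseteq> {..<n}"
    using finite_nat_bounded[OF X(2)] by blast
  have "{y. \<forall>i<n. y i = x i} \<subseteq> (\<Pi>\<^sub>E i\<in>UNIV. X i)"
    using X(1) n by (fastforce simp: PiE_iff)
  with X(3) show thesis
    by (intro that) blast
qed

lemma compact_UNIV_fun_finite: "compact (UNIV :: ('i \<Rightarrow> 'a::{finite, topological_space}) set)"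
proof -
  have "compact_space (euclidean :: 'a topology)"
    by (simp add: compact_space_def compactin_euclidean_iff finite_imp_compact)
  then have "compact_space (product_topology (\<lambda>_::'i. euclidean :: 'a topology) UNIV)"
    by (simp add: compact_space_product_topology)
  then show ?thesis
    by (simp add: euclidean_product_topology compact_space_def compactin_euclidean_iff)
qed

lemma prefix_determined_imp_open:
  fixes B :: "(nat \<Rightarrow> 'a::discrete_topology) set"
  assumes "prefix_determined n B"
  shows "open B"
proof (rule open_subopen[THEN iffD2], intro ballI)
  fix x assume "x \<in> B"
  with assms have "{y. \<forall>i<n. y i = x i} \<subseteq> B"
    by (auto dest: prefix_determinedD)
  with open_cylinder show "\<exists>T. open T \<and> x \<in> T \<and> T \<subseteq> B"
    by blast
qed

text \<open>Around each point a clopen set contains a cylinder, or is disjoint from one; by compactness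
  finitely many of these cylinders cover the space, and the longest of their prefixes works.\<close>

lemma clopen_imp_prefix_determined:
  fixes B :: "(nat \<Rightarrow> 'a::{finite, discrete_topology}) set"
  assumes "open B" "closed B"
  obtains n where "prefix_determined n B"
proof -
  have "\<exists>n. \<forall>y. (\<forall>i<n. y i = x i) \<longrightarrow> (y \<in> B \<longleftrightarrow> x \<in> B)" for x
  proof (cases "x \<in> B")
    case True
    obtain n where "{y. \<forall>i<n. y i = x i} \<subseteq> B"
      using open_contains_cylinder[OF assms(1) True] .
    with True show ?thesis
      by blast
  next
    case False
    have "open (- B)"
      using assms(2) by (simp add: open_Compl)
    then obtain n where "{y. \<forall>i<n. y i = x i} \<subseteq> - B"
      using open_contains_cylinder False by blast
    with False show ?thesis
      by blast
  qed
  then obtain r where r: "\<And>x y. \<forall>i<r x. y i = x i \<Longrightarrow> y \<in> B \<longleftrightarrow> x \<in> B"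
    using choice[of "\<lambda>x n. \<forall>y. (\<forall>i<n. y i = x i) \<longrightarrow> (y \<in> B \<longleftrightarrow> x \<in> B)"] by blast
  have cover: "UNIV \<subseteq> (\<Union>c\<in>UNIV. {y. \<forall>i<r c. y i = c i})"
    by blast
  obtain C where C: "finite C" "UNIV \<subseteq> (\<Union>c\<in>C. {y. \<forall>i<r c. y i = c i})"
    by (rule compactE_image[OF compact_UNIV_fun_finite open_cylinder cover])
  show thesis
  proof (rule that[of "Max (r ` C)"], unfold prefix_determined_def, intro allI impI)
    fix x y :: "nat \<Rightarrow> 'a"
    assume xy: "\<forall>i<Max (r ` C). x i = y i"
    obtain c where c: "c \<in> C" "\<forall>i<r c. x i = c i"
      using C(2) by blast
    moreover have "r c \<le> Max (r ` C)"
      using C(1) c(1) by simp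
    ultimately have "\<forall>i<r c. y i = c i"
      using xy by auto
    then show "x \<in> B \<longleftrightarrow> y \<in> B"
      using r c(2) by blast
  qed
qed

lemma clopen_set_iff_prefix_determined: "clopen_set B \<longleftrightarrow> (\<exists>n. prefix_determined n B)"
  unfolding clopen_set_def
  by (metis clopen_imp_prefix_determined prefix_determined_imp_open prefix_determined_Compl
      closed_open double_compl)

lemma prefix_determined_imp_clopen_set: "prefix_determined n B \<Longrightarrow> clopen_set B"
  by (auto simp: clopen_set_iff_prefix_determined)

definition acts_on_prefix :: "nat \<Rightarrow> ((nat \<Rightarrow> 'a) \<Rightarrow> nat \<Rightarrow> 'a) \<Rightarrow> bool" where
  "acts_on_prefix n g \<longleftrightarrow> (\<forall>x i. n \<le> i \<longrightarrow> g x i = x i) \<and>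
     (\<forall>x y. (\<forall>i<n. x i = y i) \<longrightarrow> (\<forall>i<n. g x i = g y i))"

lemma S2inf_iff: "g \<in> S2inf \<longleftrightarrow> bij g \<and> (\<exists>n. acts_on_prefix n g)"
  unfolding S2inf_def acts_on_prefix_def by (simp add: all_conj_distrib)

lemma S2inf_bij: "g \<in> S2inf \<Longrightarrow> bij g"
  by (simp add: S2inf_iff)

lemma id_in_S2inf: "id \<in> S2inf"
  unfolding S2inf_iff acts_on_prefix_def by auto

lemma acts_on_prefix_fixes_tail:
  "acts_on_prefix n g \<Longrightarrow> n \<le> i \<Longrightarrow> g x i = x i"
  unfolding acts_on_prefix_def by blast

lemma acts_on_prefix_agree:
  "acts_on_prefix n g \<Longrightarrow> \<forall>j<n. x j = y j \<Longrightarrow> i < n \<Longrightarrow> g x i = g y i"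
  unfolding acts_on_prefix_def by blast

lemma acts_on_prefix_mono:
  assumes "acts_on_prefix n g" "n \<le> m"
  shows "acts_on_prefix m g"
  unfolding acts_on_prefix_def
proof (intro conjI allI impI)
  fix x i assume "m \<le> i"
  then show "g x i = x i"
    using assms by (simp add: acts_on_prefix_fixes_tail)
next
  fix x y :: "nat \<Rightarrow> 'a" and i
  assume xy: "\<forall>i<m. x i = y i" and "i < m"
  show "g x i = g y i"
  proof (cases "i < n")
    case True
    with xy assms show ?thesis
      by (intro acts_on_prefix_agree[OF assms(1)]) auto
  next
    case False
    with xy \<open>i < m\<close> assms(1) show ?thesis
      by (simp add: acts_on_prefix_fixes_tail)
  qed
qed

lemma acts_on_prefix_comp:
  assumes "acts_on_prefix n g" "acts_on_prefix n h"
  shows "acts_on_prefix n (g \<circ> h)"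
  unfolding acts_on_prefix_def
proof (intro conjI allI impI)
  fix x i assume "n \<le> i"
  then show "(g \<circ> h) x i = x i"
    using assms by (simp add: acts_on_prefix_fixes_tail)
next
  fix x y :: "nat \<Rightarrow> 'a" and i
  assume "\<forall>i<n. x i = y i" "i < n"
  then show "(g \<circ> h) x i = (g \<circ> h) y i"
    using assms by (simp add: acts_on_prefix_agree)
qed

lemma acts_on_prefix_fixpoint_iff:
  assumes "acts_on_prefix n g"
  shows "g x = x \<longleftrightarrow> (\<forall>i<n. g x i = x i)"
  using assms unfolding acts_on_prefix_def fun_eq_iff by (meson not_le)

lemma acts_on_prefix_agree_iff:
  assumes "bij g" "acts_on_prefix n g"
  shows "(\<forall>i<n. g x i = g y i) \<longleftrightarrow> (\<forall>i<n. x i = y i)"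
proof
  assume agree: "\<forall>i<n. g x i = g y i"
  define z where "z i = (if i < n then y i else x i)" for i
  have "\<forall>i<n. g z i = g y i"
    using assms(2) unfolding acts_on_prefix_def z_def by simp
  moreover have "\<forall>i. n \<le> i \<longrightarrow> g z i = g x i"
    using assms(2) unfolding acts_on_prefix_def z_def by simp
  ultimately have "g z = g x"
    using agree by (intro ext) (metis not_le)
  then have "z = x"
    using assms(1) by (simp add: bij_def inj_eq)
  moreover have "\<forall>i<n. z i = y i"
    by (simp add: z_def)
  ultimately show "\<forall>i<n. x i = y i"
    by simp
qed (use assms(2) in \<open>simp add: acts_on_prefix_def\<close>)

lemma acts_on_prefix_inv:
  assumes "bij g" "acts_on_prefix n g"
  shows "acts_on_prefix n (inv_into UNIV g)"
proof -
  have g_inv: "g (inv_into UNIV g x) = x" for x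
    using assms(1) by (simp add: bij_is_surj surj_f_inv_f)
  have "inv_into UNIV g x i = x i" if "n \<le> i" for x i
    using assms(2) that unfolding acts_on_prefix_def by (metis g_inv)
  moreover have "\<forall>i<n. inv_into UNIV g x i = inv_into UNIV g y i" if "\<forall>i<n. x i = y i" for x y
    using acts_on_prefix_agree_iff[OF assms, of "inv_into UNIV g x" "inv_into UNIV g y"] that by (simp add: g_inv)
  ultimately show ?thesis
    unfolding acts_on_prefix_def by blast
qed

lemma S2inf_comp: "g \<in> S2inf \<Longrightarrow> h \<in> S2inf \<Longrightarrow> g \<circ> h \<in> S2inf"
proof -
  assume "g \<in> S2inf" "h \<in> S2inf"
  then obtain n m where "bij g" "bij h" "acts_on_prefix n g" "acts_on_prefix m h"
    by (auto simp: S2inf_iff)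
  moreover have "acts_on_prefix (max n m) g" "acts_on_prefix (max n m) h"
    using calculation by (auto intro: acts_on_prefix_mono)
  ultimately show ?thesis
    unfolding S2inf_iff by (blast intro: bij_comp acts_on_prefix_comp)
qed

lemma S2inf_inv: "g \<in> S2inf \<Longrightarrow> inv_into UNIV g \<in> S2inf"
  unfolding S2inf_iff by (blast intro: acts_on_prefix_inv bij_imp_bij_inv)

lemma prefix_determined_vimage:
  assumes "acts_on_prefix n g" "prefix_determined n B"
  shows "prefix_determined n (g -` B)"
  using assms unfolding acts_on_prefix_def prefix_determined_def by simp

lemma clopen_set_vimage:
  assumes "g \<in> S2inf" "clopen_set B"
  shows "clopen_set (g -` B)"
proof -
  obtain n m where "acts_on_prefix n g" "prefix_determined m B"
    using assms by (auto simp: S2inf_iff clopen_set_iff_prefix_determined)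
  then have "acts_on_prefix (max n m) g" "prefix_determined (max n m) B"
    by (auto intro: acts_on_prefix_mono prefix_determined_mono)
  then show ?thesis
    using clopen_set_iff_prefix_determined prefix_determined_vimage by blast
qed

lemma clopen_set_sym_diff: "clopen_set B \<Longrightarrow> clopen_set C \<Longrightarrow> clopen_set (sym_diff B C)"
  unfolding clopen_set_def by (intro conjI open_Un open_Diff closed_Un closed_Diff) auto

lemma clopen_set_empty: "clopen_set {}"
  by (simp add: clopen_set_def)

lemma cls_eq_iff: "cls B = cls C \<longleftrightarrow> B = C \<or> B = - C"
  unfolding cls_def doubleton_eq_iff by auto

lemma cls_neqI:
  assumes "(x \<in> B) \<noteq> (x \<in> C)" "(y \<in> B) = (y \<in> C)"
  shows "cls B \<noteq> cls C"
  using assms by (auto simp: cls_eq_iff)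

lemma cls_add_cls: "cls_add (cls B) (cls C) = cls (sym_diff B C)"
  unfolding cls_add_def cls_def by auto

lemma cls_act_inv_cls: "bij g \<Longrightarrow> cls_act (inv_into UNIV g) (cls B) = cls (g -` B)"
  unfolding cls_act_def cls_def by (simp add: bij_vimage_eq_inv_image bij_image_Compl_eq bij_imp_bij_inv)

lemma carrier_Gsd_iff: "(g, F) \<in> carrier Gsd \<longleftrightarrow> g \<in> S2inf \<and> (\<exists>B. F = cls B \<and> clopen_set B)"
  by (auto simp: Gsd_def Ctilde_def)

lemma one_Gsd: "\<one>\<^bsub>Gsd\<^esub> = (id, cls {})"
  by (simp add: Gsd_def)

lemma mult_Gsd: "bij h \<Longrightarrow> (g, cls B) \<otimes>\<^bsub>Gsd\<^esub> (h, cls C) = (g \<circ> h, cls (sym_diff (h -` B) C))"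
  by (simp add: Gsd_def cls_act_inv_cls cls_add_cls)

lemma pair_in_carrier_Gsd: "g \<in> S2inf \<Longrightarrow> clopen_set B \<Longrightarrow> (g, cls B) \<in> carrier Gsd"
  by (auto simp: carrier_Gsd_iff)

lemma carrier_GsdE:
  assumes "x \<in> carrier Gsd"
  obtains g B where "x = (g, cls B)" "g \<in> S2inf" "clopen_set B"
  using assms by (cases x) (auto simp: carrier_Gsd_iff)

lemma group_Gsd: "group Gsd"
proof (rule groupI)
  fix x y assume "x \<in> carrier Gsd" "y \<in> carrier Gsd"
  moreover obtain g B where "x = (g, cls B)" "g \<in> S2inf" "clopen_set B"
    using \<open>x \<in> carrier Gsd\<close> by (rule carrier_GsdE)
  moreover obtain h C where "y = (h, cls C)" "h \<in> S2inf" "clopen_set C"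
    using \<open>y \<in> carrier Gsd\<close> by (rule carrier_GsdE)
  ultimately show "x \<otimes>\<^bsub>Gsd\<^esub> y \<in> carrier Gsd"
    by (auto simp: mult_Gsd S2inf_bij carrier_Gsd_iff
        intro: S2inf_comp clopen_set_sym_diff clopen_set_vimage)
next
  show "\<one>\<^bsub>Gsd\<^esub> \<in> carrier Gsd"
    by (auto simp: one_Gsd carrier_Gsd_iff id_in_S2inf clopen_set_empty)
next
  fix x y z assume "x \<in> carrier Gsd" "y \<in> carrier Gsd" "z \<in> carrier Gsd"
  then obtain g B h C l D where x: "x = (g, cls B)" and y: "y = (h, cls C)" "bij h"
    and z: "z = (l, cls D)" "bij l"
    by (metis carrier_GsdE S2inf_bij)
  have "x \<otimes>\<^bsub>Gsd\<^esub> y \<otimes>\<^bsub>Gsd\<^esub> z = (g \<circ> h \<circ> l, cls (sym_diff (l -` sym_diff (h -` B) C) D))"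
    using x y z by (simp add: mult_Gsd)
  also have "sym_diff (l -` sym_diff (h -` B) C) D = sym_diff ((h \<circ> l) -` B) (sym_diff (l -` C) D)"
    by auto
  also have "(g \<circ> h \<circ> l, cls \<dots>) = x \<otimes>\<^bsub>Gsd\<^esub> (y \<otimes>\<^bsub>Gsd\<^esub> z)"
    using x y z by (simp add: mult_Gsd bij_comp comp_assoc)
  finally show "x \<otimes>\<^bsub>Gsd\<^esub> y \<otimes>\<^bsub>Gsd\<^esub> z = x \<otimes>\<^bsub>Gsd\<^esub> (y \<otimes>\<^bsub>Gsd\<^esub> z)" .
next
  fix x assume "x \<in> carrier Gsd"
  then obtain g B where "x = (g, cls B)" "bij g"
    by (metis carrier_GsdE S2inf_bij)
  then show "\<one>\<^bsub>Gsd\<^esub> \<otimes>\<^bsub>Gsd\<^esub> x = x"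
    by (simp add: one_Gsd mult_Gsd)
next
  fix x assume "x \<in> carrier Gsd"
  then obtain g B where x: "x = (g, cls B)" "g \<in> S2inf" "clopen_set B"
    by (rule carrier_GsdE)
  let ?g' = "inv_into UNIV g"
  have "(?g', cls (?g' -` B)) \<in> carrier Gsd"
    using x by (auto simp: carrier_Gsd_iff intro: S2inf_inv clopen_set_vimage)
  moreover have "?g' \<circ> g = id"
    using x(2) by (simp add: S2inf_bij bij_is_inj)
  then have "(?g', cls (?g' -` B)) \<otimes>\<^bsub>Gsd\<^esub> x = \<one>\<^bsub>Gsd\<^esub>"
    using x by (simp add: mult_Gsd S2inf_bij one_Gsd vimage_comp)
  ultimately show "\<exists>y\<in>carrier Gsd. y \<otimes>\<^bsub>Gsd\<^esub> x = \<one>\<^bsub>Gsd\<^esub>"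
    by blast
qed

lemma ftilde_in_carrier: "clopen_set A \<Longrightarrow> ftilde A \<in> carrier Gsd"
  by (simp add: ftilde_def pair_in_carrier_Gsd id_in_S2inf)

lemma inv_Gsd_eq_self:
  assumes "x \<in> carrier Gsd" "x \<otimes>\<^bsub>Gsd\<^esub> x = \<one>\<^bsub>Gsd\<^esub>"
  shows "inv\<^bsub>Gsd\<^esub> x = x"
  using group.inv_equality[OF group_Gsd] assms by blast

lemma ftilde_in_centralizer_ftilde:
  assumes "clopen_set F"
  shows "ftilde F \<in> centralizer_of Gsd (ftilde A)"
proof -
  have "sym_diff F A = sym_diff A F"
    by blast
  then show ?thesis
    using assms by (simp add: centralizer_of_def ftilde_in_carrier[unfolded ftilde_def] ftilde_def mult_Gsd)
qed

lemma conj_by_ftilde: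
  assumes "clopen_set F" "bij k"
  shows "inv\<^bsub>Gsd\<^esub> (ftilde F) \<otimes>\<^bsub>Gsd\<^esub> (k, cls B) \<otimes>\<^bsub>Gsd\<^esub> ftilde F
           = (k, cls (sym_diff (sym_diff (k -` F) B) F))"
proof -
  have "inv\<^bsub>Gsd\<^esub> (ftilde F) = ftilde F"
    using assms(1) by (intro inv_Gsd_eq_self) (simp_all add: ftilde_in_carrier[unfolded ftilde_def] ftilde_def mult_Gsd one_Gsd)
  then show ?thesis
    using assms(2) by (simp add: ftilde_def mult_Gsd)
qed

lemma perm_in_centralizer_ftilde:
  assumes "g \<in> S2inf" "g -` A = A"
  shows "(g, cls {}) \<in> centralizer_of Gsd (ftilde A)"
  using assms by (simp add: centralizer_of_def pair_in_carrier_Gsd clopen_set_empty ftilde_def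
      mult_Gsd S2inf_bij)

lemma conj_by_involution:
  assumes "g \<in> S2inf" "g \<circ> g = id"
  shows "inv\<^bsub>Gsd\<^esub> (g, cls {}) \<otimes>\<^bsub>Gsd\<^esub> ftilde B \<otimes>\<^bsub>Gsd\<^esub> (g, cls {}) = ftilde (g -` B)"
proof -
  have "inv\<^bsub>Gsd\<^esub> (g, cls {}) = (g, cls {})"
    using assms by (intro inv_Gsd_eq_self) (simp_all add: pair_in_carrier_Gsd clopen_set_empty
        mult_Gsd one_Gsd S2inf_bij)
  then show ?thesis
    using assms by (simp add: ftilde_def mult_Gsd S2inf_bij)
qed

lemma cylinder_conjugates_distinct:
  assumes k: "bij k" "acts_on_prefix n k" and x0: "k x0 \<noteq> x0" and "m \<noteq> m'"
  defines "C \<equiv> \<lambda>j. {x. (\<forall>i<n. x i = k x0 i) \<and> x (n + j)}"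
  shows "cls (sym_diff (sym_diff (k -` C m) B) (C m)) \<noteq>
    cls (sym_diff (sym_diff (k -` C m') B) (C m'))"
proof (rule cls_neqI)
  have k_off_C: "k x \<notin> C j" if "\<forall>i<n. x i = k x0 i" for x j
  proof
    assume "k x \<in> C j"
    then have "\<forall>i<n. k x i = k x0 i"
      by (simp add: C_def)
    then have "\<forall>i<n. x i = x0 i"
      by (simp add: acts_on_prefix_agree_iff[OF k])
    then have "k x0 = x0"
      using that acts_on_prefix_fixpoint_iff[OF k(2)] by simp
    with x0 show False ..
  qed
  let ?x = "\<lambda>i. if i = n + m then True else if i = n + m' then False else k x0 i"
  have "?x \<in> C m" "?x \<notin> C m'" "k ?x \<notin> C m" "k ?x \<notin> C m'"
    using \<open>m \<noteq> m'\<close> k_off_C[of ?x] by (auto simp: C_def)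
  then show "(?x \<in> sym_diff (sym_diff (k -` C m) B) (C m)) \<noteq>
      (?x \<in> sym_diff (sym_diff (k -` C m') B) (C m'))"
    by auto
  let ?y = "\<lambda>i. False"
  have "k ?y (n + j) = False" for j
    using acts_on_prefix_fixes_tail[OF k(2)] by simp
  then show "(?y \<in> sym_diff (sym_diff (k -` C m) B) (C m)) =
      (?y \<in> sym_diff (sym_diff (k -` C m') B) (C m'))"
    by (simp add: C_def)
qed

lemma fpc_ftilde_perm_part_eq_id:
  assumes "(k, F) \<in> fpc Gsd (ftilde A)"
  shows "k = id"
proof (rule ccontr)
  assume "k \<noteq> id"
  then obtain x0 where x0: "k x0 \<noteq> x0"
    by (metis eq_id_iff)
  have "(k, F) \<in> carrier Gsd"
    using assms by (simp add: fpc_def)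
  then obtain B where F: "F = cls B" and "k \<in> S2inf"
    by (auto simp: carrier_Gsd_iff)
  then obtain n where k: "bij k" "acts_on_prefix n k"
    by (auto simp: S2inf_iff)
  define C where "C m = {x. (\<forall>i<n. x i = k x0 i) \<and> x (n + m)}" for m
  define P where "P m = sym_diff (sym_diff (k -` C m) B) (C m)" for m
  have "prefix_determined (n + m + 1) (C m)" for m
    unfolding prefix_determined_def C_def by auto
  then have C_clopen: "clopen_set (C m)" for m
    by (rule prefix_determined_imp_clopen_set)
  have "inj (\<lambda>m. (k, cls (P m)))"
    using cylinder_conjugates_distinct[OF k x0] unfolding inj_def P_def C_def by blast
  moreover have "\<exists>t \<in> centralizer_of Gsd (ftilde A).
      inv\<^bsub>Gsd\<^esub> t \<otimes>\<^bsub>Gsd\<^esub> (k, F) \<otimes>\<^bsub>Gsd\<^esub> t = (k, cls (P m))" for m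
    unfolding F P_def using ftilde_in_centralizer_ftilde[OF C_clopen] conj_by_ftilde[OF C_clopen k(1)]
    by (intro bexI[of _ "ftilde (C m)"])
  ultimately have "(k, F) \<notin> fpc Gsd (ftilde A)"
    by (rule not_in_fpcI)
  with assms show False
    by contradiction
qed

definition prefix_swap :: "nat \<Rightarrow> cantor \<Rightarrow> cantor \<Rightarrow> nat \<Rightarrow> cantor \<Rightarrow> cantor" where
  "prefix_swap n p q j x =
     (if x j \<and> (\<forall>i<n. x i = p i) then (\<lambda>i. if i < n then q i else x i)
      else if x j \<and> (\<forall>i<n. x i = q i) then (\<lambda>i. if i < n then p i else x i)
      else x)"

lemma prefix_swap_cases:
  fixes x :: cantor and j n :: nat and p q :: cantor
  obtains
    (from_p) "x j" "\<forall>i<n. x i = p i" "prefix_swap n p q j x = (\<lambda>i. if i < n then q i else x i)"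
  | (from_q) "x j" "\<forall>i<n. x i = q i" "\<not> (\<forall>i<n. x i = p i)"
      "prefix_swap n p q j x = (\<lambda>i. if i < n then p i else x i)"
  | (fixed) "prefix_swap n p q j x = x"
proof (cases "x j \<and> (\<forall>i<n. x i = p i)")
  case True
  then show thesis
    by (intro from_p) (simp_all add: prefix_swap_def)
next
  case not_p: False
  show thesis
  proof (cases "x j \<and> (\<forall>i<n. x i = q i)")
    case True
    have "prefix_swap n p q j x = (\<lambda>i. if i < n then p i else x i)"
      unfolding prefix_swap_def by (simp only: if_not_P[OF not_p] if_P[OF True])
    with True not_p show thesis
      by (intro from_q) simp_all
  next
    case False
    have "prefix_swap n p q j x = x"
      unfolding prefix_swap_def by (simp only: if_not_P[OF not_p] if_not_P[OF False])
    then show thesis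
      by (rule fixed)
  qed
qed

lemma prefix_swap_vimage_eq:
  assumes A: "prefix_determined n A" and pq: "p \<in> A \<longleftrightarrow> q \<in> A"
  shows "prefix_swap n p q j -` A = A"
proof -
  have "prefix_swap n p q j x \<in> A \<longleftrightarrow> x \<in> A" for x
  proof (cases rule: prefix_swap_cases[of x j n p q])
    case from_p
    then have "prefix_swap n p q j x \<in> A \<longleftrightarrow> q \<in> A" "x \<in> A \<longleftrightarrow> p \<in> A"
      using prefix_determinedD[OF A, of "prefix_swap n p q j x" q] prefix_determinedD[OF A, of x p]
      by simp_all
    with pq show ?thesis
      by simp
  next
    case from_q
    then have "prefix_swap n p q j x \<in> A \<longleftrightarrow> p \<in> A" "x \<in> A \<longleftrightarrow> q \<in> A"
      using prefix_determinedD[OF A, of "prefix_swap n p q j x" p] prefix_determinedD[OF A, of x q]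
      by simp_all
    with pq show ?thesis
      by simp
  qed simp
  then show ?thesis
    by blast
qed

context
  fixes n j :: nat and p q :: cantor
  assumes j: "n \<le> j" and pq: "\<not> (\<forall>i<n. p i = q i)"
begin

lemma prefix_swap_involution: "prefix_swap n p q j \<circ> prefix_swap n p q j = id"
proof
  fix x
  show "(prefix_swap n p q j \<circ> prefix_swap n p q j) x = id x"
  proof (cases rule: prefix_swap_cases[of x j n p q])
    case from_p
    moreover have "\<not> (\<forall>i<n. q i = p i)"
      using pq by auto
    ultimately show ?thesis
      using j by (simp add: prefix_swap_def fun_eq_iff)
  next
    case from_q
    then show ?thesis
      using j by (simp add: prefix_swap_def fun_eq_iff)
  qed simp
qed

lemma prefix_swap_in_S2inf: "prefix_swap n p q j \<in> S2inf"
proof -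
  have "bij (prefix_swap n p q j)"
    using prefix_swap_involution o_bij by blast
  moreover have "acts_on_prefix (Suc j) (prefix_swap n p q j)"
    unfolding acts_on_prefix_def
  proof (intro conjI allI impI)
    fix x i assume "Suc j \<le> i"
    then show "prefix_swap n p q j x i = x i"
      using j by (simp add: prefix_swap_def)
  next
    fix x y :: cantor and i assume "\<forall>i<Suc j. x i = y i" and "i < Suc j"
    then have "x i = y i" "x j = y j" "\<forall>i<n. x i = y i"
      using j by auto
    then show "prefix_swap n p q j x i = prefix_swap n p q j y i"
      unfolding prefix_swap_def by auto
  qed
  ultimately show ?thesis
    by (auto simp: S2inf_iff)
qed

end

lemma swap_conjugates_distinct:
  assumes B: "prefix_determined N B" and p: "p \<in> B" and q: "q \<notin> B" and "m \<noteq> m'"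
  shows "cls (prefix_swap N p q (N + m) -` B) \<noteq> cls (prefix_swap N p q (N + m') -` B)"
proof (rule cls_neqI)
  let ?g = "\<lambda>j. prefix_swap N p q (N + j)"
  let ?x = "\<lambda>i. if i = N + m then True else if i = N + m' then False else p i"
  have "?g m ?x = (\<lambda>i. if i < N then q i else ?x i)" "?g m' ?x = ?x"
    using \<open>m \<noteq> m'\<close> by (auto simp: prefix_swap_def)
  moreover have "(\<lambda>i. if i < N then q i else ?x i) \<in> B \<longleftrightarrow> q \<in> B" "?x \<in> B \<longleftrightarrow> p \<in> B"
    by (rule prefix_determinedD[OF B], simp)+
  ultimately show "(?x \<in> ?g m -` B) \<noteq> (?x \<in> ?g m' -` B)"
    using p q by simp
  let ?y = "\<lambda>i. if i = N + m \<or> i = N + m' then False else p i"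
  have "?g m ?y = ?y" "?g m' ?y = ?y"
    by (simp_all add: prefix_swap_def)
  then show "(?y \<in> ?g m -` B) = (?y \<in> ?g m' -` B)"
    by simp
qed

lemma ftilde_in_fpc_ftilde_cases:
  assumes "ftilde B \<in> fpc Gsd (ftilde A)" "clopen_set A" "clopen_set B"
  shows "B \<in> {{}, UNIV, A, - A}"
proof (rule ccontr)
  assume "B \<notin> {{}, UNIV, A, - A}"
  then obtain p q where p: "p \<in> B" and q: "q \<notin> B" and pq: "p \<in> A \<longleftrightarrow> q \<in> A"
    by blast
  obtain N where A: "prefix_determined N A" and B: "prefix_determined N B"
    using assms(2,3) unfolding clopen_set_iff_prefix_determined
    by (metis max.cobounded1 max.cobounded2 prefix_determined_mono)
  have p_neq_q: "\<not> (\<forall>i<N. p i = q i)"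
    using prefix_determinedD[OF B, of p q] p q by blast
  define g where "g m = prefix_swap N p q (N + m)" for m
  have g_S2inf: "g m \<in> S2inf" and g_inv: "g m \<circ> g m = id" and g_A: "g m -` A = A" for m
    unfolding g_def using prefix_swap_in_S2inf prefix_swap_involution p_neq_q
      prefix_swap_vimage_eq[OF A pq] by simp_all
  have "cls (g m -` B) \<noteq> cls (g m' -` B)" if "m \<noteq> m'" for m m'
    unfolding g_def using B p q that by (rule swap_conjugates_distinct)
  then have "inj (\<lambda>m. ftilde (g m -` B))"
    unfolding inj_def ftilde_def by blast
  moreover have "\<exists>t \<in> centralizer_of Gsd (ftilde A).
      inv\<^bsub>Gsd\<^esub> t \<otimes>\<^bsub>Gsd\<^esub> ftilde B \<otimes>\<^bsub>Gsd\<^esub> t = ftilde (g m -` B)" for m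
    using perm_in_centralizer_ftilde[OF g_S2inf g_A] conj_by_involution[OF g_S2inf g_inv]
    by (intro bexI[of _ "(g m, cls {})"])
  ultimately have "ftilde B \<notin> fpc Gsd (ftilde A)"
    by (rule not_in_fpcI)
  with assms(1) show False
    by contradiction
qed

theorem lemma3p3:
  fixes A :: "cantor set"
  assumes "clopen_set A" and "A \<noteq> {}" and "A \<noteq> UNIV"
  shows "fpc Gsd (ftilde A) = {\<one>\<^bsub>Gsd\<^esub>, ftilde A}"
proof
  \<comment> \<open>The last two hypotheses only make the two elements distinct; the proof does not use them.\<close>
  interpret Gsd: group Gsd
    by (rule group_Gsd)
  show "{\<one>\<^bsub>Gsd\<^esub>, ftilde A} \<subseteq> fpc Gsd (ftilde A)"
    using ftilde_in_carrier[OF assms(1)]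
    by (auto simp: centralizer_of_def intro!: Gsd.commuting_in_fpc)
next
  show "fpc Gsd (ftilde A) \<subseteq> {\<one>\<^bsub>Gsd\<^esub>, ftilde A}"
  proof
    fix h assume h: "h \<in> fpc Gsd (ftilde A)"
    then obtain k B where hkB: "h = (k, cls B)" and B: "clopen_set B"
      unfolding fpc_def by (auto elim: carrier_GsdE)
    with h have "k = id"
      using fpc_ftilde_perm_part_eq_id by blast
    with h hkB have "B \<in> {{}, UNIV, A, - A}"
      using ftilde_in_fpc_ftilde_cases assms(1) B by (simp add: ftilde_def)
    with hkB \<open>k = id\<close> show "h \<in> {\<one>\<^bsub>Gsd\<^esub>, ftilde A}"
      by (auto simp: one_Gsd ftilde_def cls_eq_iff)
  qed
qed

end
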